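(* Consider the dynamic trial-offer market with social influence under the quality ranking with $n\ge2$ products, visibilities $v_1\ge v_2\ge\cdots\ge v_n>0$, initial appeals $A_1,\dots,A_n>0$ and qualities $1\ge q_1>q_2>\cdots>q_n\ge 0$. Then almost surely $\frac{d_{1,t}}{\sum_{j=1}^n d_{j,t}}\to1$ as $t\to\infty$, i.e. the market converges almost surely to a monopoly for product 1 (the product of highest quality).
   Context: Dynamic trial-offer market with social influence under the quality ranking: product $i$ is permanently displayed in position $i$ with visibility $v_i$. Let $d_{i,t}$ be the number of purchases of product $i$ before step $t$ ($d_{i,1}=0$) and $a_{i,t}=A_i+d_{i,t}$. At step $t$ one participant tries product $i$ with probability $\frac{v_i a_{i,t}}{\sum_j v_j a_{j,t}}$, then purchases it with probability $q_i$ (independently); if purchased, $d_{i,t+1}=d_{i,t}+1$, all other counts unchanged. The market share of product $i$ at step $t$ is $d_{i,t}/\sum_j d_{j,t}$. *)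

theory Defs
  imports "HOL-Probability.Probability"
begin

text \<open>A market state d assigns to each product
its number of purchases so far. The randomness of one step is encoded by two
numbers u, w in [0,1] (to be drawn independently and uniformly): u selects the
product to be tried (inverse-CDF sampling with the trial probabilities
v_i a_i / (sum_j v_j a_j)), and the tried product i is purchased iff w < q_i.\<close>

definition weight_total :: "nat \<Rightarrow> (nat \<Rightarrow> real) \<Rightarrow> (nat \<Rightarrow> real) \<Rightarrow> (nat \<Rightarrow> nat) \<Rightarrow> real" where
  "weight_total n v A d = (\<Sum>j\<in>{1..n}. v j * (A j + real (d j)))"

definition cum_try_prob :: "nat \<Rightarrow> (nat \<Rightarrow> real) \<Rightarrow> (nat \<Rightarrow> real) \<Rightarrow> (nat \<Rightarrow> nat) \<Rightarrow> nat \<Rightarrow> real" where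
  "cum_try_prob n v A d i = (\<Sum>j\<in>{1..i}. v j * (A j + real (d j))) / weight_total n v A d"

definition tried_product :: "nat \<Rightarrow> (nat \<Rightarrow> real) \<Rightarrow> (nat \<Rightarrow> real) \<Rightarrow> (nat \<Rightarrow> nat) \<Rightarrow> real \<Rightarrow> nat" where
  "tried_product n v A d u =
     (if \<exists>i\<in>{1..n}. u < cum_try_prob n v A d i
      then (LEAST i. 1 \<le> i \<and> i \<le> n \<and> u < cum_try_prob n v A d i)
      else n)"

definition market_step :: "nat \<Rightarrow> (nat \<Rightarrow> real) \<Rightarrow> (nat \<Rightarrow> real) \<Rightarrow> (nat \<Rightarrow> real) \<Rightarrow>
    (nat \<Rightarrow> nat) \<Rightarrow> real \<Rightarrow> real \<Rightarrow> (nat \<Rightarrow> nat)" where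
  "market_step n v A q d u w =
     (let i = tried_product n v A d u in if w < q i then d(i := Suc (d i)) else d)"

text \<open>market_traj n v A q xs t is the purchase vector d_{.,t+1}
(so index 0 is the initial state d_{.,1} = 0), driven by the random inputs xs t True
(trial choice) and xs t False (purchase decision) of step t.\<close>

primrec market_traj :: "nat \<Rightarrow> (nat \<Rightarrow> real) \<Rightarrow> (nat \<Rightarrow> real) \<Rightarrow> (nat \<Rightarrow> real) \<Rightarrow>
    (nat \<Rightarrow> bool \<Rightarrow> real) \<Rightarrow> nat \<Rightarrow> (nat \<Rightarrow> nat)" where
  "market_traj n v A q xs 0 = (\<lambda>_. 0)"
| "market_traj n v A q xs (Suc t) =
     market_step n v A q (market_traj n v A q xs t) (xs t True) (xs t False)"

definition market_share :: "nat \<Rightarrow> (nat \<Rightarrow> nat) \<Rightarrow> nat \<Rightarrow> real" where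
  "market_share n d i = real (d i) / (\<Sum>j\<in>{1..n}. real (d j))"

end

theory Submission
  imports Defs
begin

text \<open>For \<open>i \<ge> 2\<close> write \<open>a\<^sub>i = A\<^sub>i + d\<^sub>i\<close>. For a small exponent \<open>p > 0\<close>, the function \<open>a\<^sub>i\<^sup>p \<cdot> a\<^sub>1\<^sup>-\<^sup>p\<^sup>\<sigma>\<close> with
  \<open>\<sigma> = (1 + v\<^sub>i q\<^sub>i / (v\<^sub>1 q\<^sub>1)) / 2 < 1\<close> (corrected by a bounded factor for small \<open>a\<^sub>1\<close>) has
  nonpositive drift along the market: a purchase of product 1, which happens at a rate \<open>v\<^sub>1 q\<^sub>1 a\<^sub>1\<close>,
  lowers it by a relative amount \<open>\<approx> p\<sigma>/a\<^sub>1\<close>, which outweighs the relative gain \<open>\<le> p/a\<^sub>i\<close> from a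
  purchase of product \<open>i\<close> at rate \<open>v\<^sub>i q\<^sub>i a\<^sub>i\<close>. By Ville's maximal inequality this nonnegative
  supermartingale stays bounded almost surely, i.e. \<open>a\<^sub>i = O(a\<^sub>1\<^sup>\<sigma>)\<close>. Since also infinitely many
  purchases occur almost surely (product 1 is bought with probability bounded below as long as
  the number of purchases is bounded), \<open>a\<^sub>1 \<rightarrow> \<infinity>\<close> and all other market shares vanish.\<close>

lemma bernoulli_powr_le:
  fixes a \<alpha> :: real
  assumes "a > 0" "0 \<le> \<alpha>" "\<alpha> \<le> 1"
  shows "a powr \<alpha> \<le> 1 + \<alpha> * (a - 1)"
proof (cases "\<alpha> = 1")
  case False
  have "a powr \<alpha> * 1 powr (1 - \<alpha>) \<le> \<alpha> * a + (1 - \<alpha>) * 1"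
    by (rule Youngs_inequality_0) (use assms False in auto)
  then show ?thesis by (simp add: algebra_simps)
qed (use assms in simp)

lemma powr_Suc_increment_le:
  fixes a p :: real
  assumes a: "a > 0" and p: "0 \<le> p" "p \<le> 1"
  shows "a * ((a + 1) powr p - a powr p) \<le> p * a powr p"
proof -
  have "a + 1 = a * (1 + 1 / a)" using a by (simp add: field_simps)
  then have "(a + 1) powr p = a powr p * (1 + 1 / a) powr p"
    using a by (simp add: powr_mult)
  also have "\<dots> \<le> a powr p * (1 + p * (1 / a))"
    using bernoulli_powr_le[of "1 + 1 / a" p] a p by (intro mult_left_mono) (auto simp: add_pos_pos)
  finally have "(a + 1) powr p - a powr p \<le> a powr p * p / a" by (simp add: algebra_simps)
  then have "a * ((a + 1) powr p - a powr p) \<le> a * (a powr p * p / a)"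
    using a by (intro mult_left_mono) auto
  then show ?thesis using a by (simp add: mult.commute)
qed

lemma powr_minus_Suc_le:
  fixes x s :: real
  assumes x: "x > 0" and s: "0 \<le> s" "s \<le> 1"
  shows "(x + 1) powr (- s) \<le> x powr (- s) * (1 - s / (x + 1))"
proof -
  have "(x / (x + 1)) powr s \<le> 1 + s * (x / (x + 1) - 1)"
    using bernoulli_powr_le[of "x / (x + 1)" s] x s by simp
  also have "\<dots> = 1 - s / (x + 1)" using x by (simp add: field_simps)
  finally have "x powr (- s) * (x / (x + 1)) powr s \<le> x powr (- s) * (1 - s / (x + 1))"
    by (simp add: mult_left_mono)
  moreover have "(x + 1) powr (- s) = x powr (- s) * (x / (x + 1)) powr s"
    using x by (simp add: powr_divide powr_minus divide_simps)
  ultimately show ?thesis by simp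
qed

lemma ratio_tendsto_zero_of_sublinear:
  fixes f g :: "nat \<Rightarrow> real"
  assumes f: "filterlim f at_top sequentially"
    and g: "\<And>t. 0 \<le> g t" "\<And>t. g t \<le> K * (c + f t) powr \<sigma>"
    and K: "0 \<le> K" and c: "0 < c" and \<sigma>: "0 \<le> \<sigma>" "\<sigma> < 1"
  shows "(\<lambda>t. g t / f t) \<longlonglongrightarrow> 0"
proof (rule tendsto_sandwich[where f = "\<lambda>_. 0" and h = "\<lambda>t. K * 2 powr \<sigma> * f t powr (\<sigma> - 1)"])
  have ev: "\<forall>\<^sub>F t in sequentially. c < f t" using f by (simp add: filterlim_at_top_dense)
  then show "\<forall>\<^sub>F t in sequentially. 0 \<le> g t / f t"
    by eventually_elim (use g(1) c in \<open>simp add: less_imp_le\<close>)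
  from ev show "\<forall>\<^sub>F t in sequentially. g t / f t \<le> K * 2 powr \<sigma> * f t powr (\<sigma> - 1)"
  proof eventually_elim
    case (elim t)
    then have ft: "0 < f t" using c by linarith
    have "(c + f t) powr \<sigma> \<le> (2 * f t) powr \<sigma>"
      using elim c \<sigma> by (intro powr_mono2) auto
    then have "g t \<le> K * (2 * f t) powr \<sigma>"
      using g(2)[of t] mult_left_mono[OF _ K] by (meson order_trans)
    also have "\<dots> = K * 2 powr \<sigma> * f t powr \<sigma>" using ft by (simp add: powr_mult)
    finally have "g t / f t \<le> K * 2 powr \<sigma> * f t powr \<sigma> / f t"
      using ft by (intro divide_right_mono) auto
    also have "\<dots> = K * 2 powr \<sigma> * f t powr (\<sigma> - 1)" using ft by (simp add: powr_diff)
    finally show ?case .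
  qed
  have "((\<lambda>t. f t powr (\<sigma> - 1)) \<longlongrightarrow> 0) sequentially"
    using \<sigma> by (intro tendsto_neg_powr f) auto
  then show "(\<lambda>t. K * 2 powr \<sigma> * f t powr (\<sigma> - 1)) \<longlonglongrightarrow> 0"
    by (rule tendsto_mult_right_zero)
qed simp

lemma market_traj_cong:
  "(\<And>s b. s < t \<Longrightarrow> xs s b = ys s b) \<Longrightarrow> market_traj n v A q xs t = market_traj n v A q ys t"
  by (induction t) auto

lemma emeasure_eq_0_of_le_epsilon:
  fixes M :: "'a measure"
  assumes "\<And>e::real. 0 < e \<Longrightarrow> emeasure M B \<le> ennreal e"
  shows "emeasure M B = 0"
proof -
  have "emeasure M B \<le> 0 + 0"
  proof (rule ennreal_le_epsilon)
    fix e :: real assume "0 < e"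
    then show "emeasure M B \<le> 0 + 0 + ennreal e" using assms by simp
  qed
  then show ?thesis by simp
qed

locale quality_market =
  fixes n :: nat and v A q :: "nat \<Rightarrow> real"
  assumes n2: "n \<ge> 2"
    and v_mono: "\<And>i j. 1 \<le> i \<Longrightarrow> i \<le> j \<Longrightarrow> j \<le> n \<Longrightarrow> v j \<le> v i"
    and v_pos: "v n > 0"
    and A_pos: "\<And>i. 1 \<le> i \<Longrightarrow> i \<le> n \<Longrightarrow> A i > 0"
    and q1: "q 1 \<le> 1"
    and q_strict: "\<And>i j. 1 \<le> i \<Longrightarrow> i < j \<Longrightarrow> j \<le> n \<Longrightarrow> q j < q i"
    and qn: "q n \<ge> 0"
begin

definition trial_weight :: "(nat \<Rightarrow> nat) \<Rightarrow> nat \<Rightarrow> real" where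
  "trial_weight d j = v j * (A j + real (d j))"

lemma first_product: "1 \<in> {1..n}"
  using n2 by auto

lemma visibility_pos: "j \<in> {1..n} \<Longrightarrow> v j > 0"
  using v_mono[of j n] v_pos by auto

lemma trial_weight_pos: "j \<in> {1..n} \<Longrightarrow> trial_weight d j > 0"
  unfolding trial_weight_def using visibility_pos A_pos by (auto intro!: mult_pos_pos add_pos_nonneg)

lemma quality_bounds: "j \<in> {1..n} \<Longrightarrow> 0 \<le> q j \<and> q j \<le> 1"
proof -
  assume j: "j \<in> {1..n}"
  have "q n \<le> q j" using q_strict[of j n] j by (cases "j = n") auto
  moreover have "q j \<le> q 1" using q_strict[of 1 j] j by (cases "j = 1") auto
  ultimately show ?thesis using qn q1 by auto
qed

lemma q1_pos: "q 1 > 0"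
  using q_strict[of 1 2] quality_bounds[of 2] n2 by auto

lemma weight_total_eq: "weight_total n v A d = (\<Sum>j\<in>{1..n}. trial_weight d j)"
  unfolding weight_total_def trial_weight_def by simp

lemma weight_total_pos: "weight_total n v A d > 0"
  unfolding weight_total_eq using n2 by (intro sum_pos) (auto intro: trial_weight_pos)

abbreviation "cum d i \<equiv> cum_try_prob n v A d i"

lemma cum_try_prob_eq: "cum d i = (\<Sum>j\<in>{1..i}. trial_weight d j) / weight_total n v A d"
  unfolding cum_try_prob_def trial_weight_def by simp

lemma cum_try_prob_0: "cum d 0 = 0"
  by (simp add: cum_try_prob_eq)

lemma cum_try_prob_n: "cum d n = 1"
  using weight_total_pos[of d] by (simp add: cum_try_prob_eq weight_total_eq)

lemma cum_try_prob_Suc: "cum d (Suc i) = cum d i + trial_weight d (Suc i) / weight_total n v A d"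
  by (simp add: cum_try_prob_eq add_divide_distrib)

lemma cum_try_prob_strict_mono: "i < j \<Longrightarrow> j \<le> n \<Longrightarrow> cum d i < cum d j"
proof (induction j)
  case (Suc j)
  have "trial_weight d (Suc j) / weight_total n v A d > 0"
    using Suc.prems trial_weight_pos[of "Suc j" d] weight_total_pos[of d] by auto
  then have "cum d j < cum d (Suc j)" by (simp add: cum_try_prob_Suc)
  with Suc show ?case by (cases "i = j") auto
qed simp

lemma cum_try_prob_mono: "i \<le> j \<Longrightarrow> j \<le> n \<Longrightarrow> cum d i \<le> cum d j"
  using cum_try_prob_strict_mono[of i j d] by (cases "i = j") auto

definition in_trial_interval :: "(nat \<Rightarrow> nat) \<Rightarrow> real \<Rightarrow> nat \<Rightarrow> bool" where
  "in_trial_interval d u i \<longleftrightarrow> (1 < i \<longrightarrow> cum d (i - 1) \<le> u) \<and> (i < n \<longrightarrow> u < cum d i)"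

abbreviation "tried d u \<equiv> tried_product n v A d u"

lemma tried_product_in_interval: "tried d u \<in> {1..n} \<and> in_trial_interval d u (tried d u)"
proof (cases "\<exists>i\<in>{1..n}. u < cum d i")
  case True
  let ?P = "\<lambda>i. 1 \<le> i \<and> i \<le> n \<and> u < cum d i"
  let ?i = "LEAST i. ?P i"
  from True obtain i where "?P i" by auto
  then have P: "?P ?i" by (rule LeastI)
  have "tried d u = ?i" unfolding tried_product_def using True by simp
  moreover have "in_trial_interval d u ?i"
    unfolding in_trial_interval_def
  proof (intro conjI impI)
    assume "1 < ?i"
    then have "\<not> ?P (?i - 1)" by (intro not_less_Least) auto
    then show "cum d (?i - 1) \<le> u" using P \<open>1 < ?i\<close> by auto
  qed (use P in auto)
  ultimately show ?thesis using P by auto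
next
  case False
  have "n - 1 \<in> {1..n}" using n2 by auto
  then have "cum d (n - 1) \<le> u" using False by (meson not_le)
  moreover have "tried d u = n" unfolding tried_product_def using False by simp
  ultimately show ?thesis using n2 by (auto simp: in_trial_interval_def)
qed

lemma trial_interval_unique:
  assumes "i \<in> {1..n}" "j \<in> {1..n}" "in_trial_interval d u i" "in_trial_interval d u j"
  shows "i = j"
proof -
  have False if "i \<in> {1..n}" "j \<in> {1..n}" "in_trial_interval d u i" "in_trial_interval d u j" "i < j"
    for i j
  proof -
    have "cum d i \<le> cum d (j - 1)" using that by (intro cum_try_prob_mono) auto
    then show False using that by (auto simp: in_trial_interval_def)
  qed
  then show ?thesis using assms by (meson linorder_neqE)
qed

lemma tried_product_eq_iff: "i \<in> {1..n} \<Longrightarrow> tried d u = i \<longleftrightarrow> in_trial_interval d u i"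
  using tried_product_in_interval[of d u] trial_interval_unique[of i "tried d u" d u] by auto

lemma tried_product_preimage:
  assumes i: "i \<in> {1..n}"
  shows "{0..1} \<inter> {u. tried d u = i} =
           (if i < n then {cum d (i - 1)..<cum d i} else {cum d (n - 1)..1})"
proof -
  have "0 \<le> cum d (i - 1)" using cum_try_prob_mono[of 0 "i - 1" d] i by (auto simp: cum_try_prob_0)
  moreover have "cum d i \<le> 1" using cum_try_prob_mono[of i n d] i by (simp add: cum_try_prob_n)
  ultimately show ?thesis
    using i cum_try_prob_0[of d] by (auto simp: tried_product_eq_iff in_trial_interval_def)
qed

lemma measurable_tried_product[measurable]:
  "(\<lambda>u. tried d u) \<in> measurable borel (count_space {1..n})"
proof (subst measurable_count_space_eq2, simp, intro conjI ballI)
  show "(\<lambda>u. tried d u) \<in> space borel \<rightarrow> {1..n}" using tried_product_in_interval by auto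
  fix i assume "i \<in> {1..n}"
  then have "(\<lambda>u. tried d u) -` {i} \<inter> space borel = {u. in_trial_interval d u i}"
    using tried_product_eq_iff by auto
  also have "\<dots> \<in> sets borel" unfolding in_trial_interval_def by measurable
  finally show "(\<lambda>u. tried d u) -` {i} \<inter> space borel \<in> sets borel" .
qed

lemma sets_tried_product: "i \<in> {1..n} \<Longrightarrow> {u. tried d u = i} \<in> sets borel"
  using measurable_sets[OF measurable_tried_product, of "{i}" d] by (simp add: vimage_def)

abbreviation "unif01 \<equiv> uniform_measure lborel {0..1::real}"

lemma prob_space_unif01: "prob_space unif01"
  by (rule prob_space_uniform_measure) auto

lemma emeasure_tried_product:
  assumes i: "i \<in> {1..n}"
  shows "emeasure unif01 {u. tried d u = i} = ennreal (trial_weight d i / weight_total n v A d)"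
proof -
  have "cum d (i - 1) \<le> cum d i" using cum_try_prob_mono[of "i - 1" i d] i by simp
  moreover have "cum d i - cum d (i - 1) = trial_weight d i / weight_total n v A d"
    using cum_try_prob_Suc[of d "i - 1"] i by simp
  ultimately show ?thesis
    using sets_tried_product[OF i] tried_product_preimage[OF i, of d] i
    by (auto simp: divide_ennreal_def cum_try_prob_n)
qed

lemma emeasure_unif01_less: "0 \<le> c \<Longrightarrow> c \<le> 1 \<Longrightarrow> emeasure unif01 {w. w < c} = ennreal c"
  by (subgoal_tac "{0..1} \<inter> {w::real. w < c} = {0..<c}") (auto simp: divide_ennreal_def)

lemma emeasure_unif01_ge: "0 \<le> c \<Longrightarrow> c \<le> 1 \<Longrightarrow> emeasure unif01 {w. \<not> w < c} = ennreal (1 - c)"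
  by (subgoal_tac "{0..1} \<inter> {w::real. \<not> w < c} = {c..1}") (auto simp: divide_ennreal_def)

definition states :: "(nat \<Rightarrow> nat) set" where
  "states = {d. \<forall>j. j \<notin> {1..n} \<longrightarrow> d j = 0}"

lemma countable_states: "countable states"
proof (rule countable_subset)
  let ?ext = "\<lambda>f j. if j \<in> {1..n} then f j else 0"
  show "states \<subseteq> ?ext ` (\<Pi>\<^sub>E j\<in>{1..n}. UNIV)"
  proof
    fix d assume "d \<in> states"
    then have "d = ?ext (restrict d {1..n})"
      unfolding states_def by (intro ext) simp
    then show "d \<in> ?ext ` (\<Pi>\<^sub>E j\<in>{1..n}. UNIV)"
      by (intro image_eqI[where x = "restrict d {1..n}"]) simp_all
  qed
  show "countable (?ext ` (\<Pi>\<^sub>E j\<in>{1..n}. UNIV :: nat set))"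
    by (intro countable_image countable_PiE) auto
qed

lemma zero_in_states: "(\<lambda>_. 0) \<in> states"
  by (simp add: states_def)

abbreviation "buy d i \<equiv> d(i := Suc (d i))"

lemma buy_in_states: "d \<in> states \<Longrightarrow> i \<in> {1..n} \<Longrightarrow> buy d i \<in> states"
  by (auto simp: states_def)

abbreviation "step d u w \<equiv> market_step n v A q d u w"

lemma market_step_eq: "step d u w = (if w < q (tried d u) then buy d (tried d u) else d)"
  by (simp add: market_step_def Let_def)

lemma market_step_in_states: "d \<in> states \<Longrightarrow> step d u w \<in> states"
  using tried_product_in_interval[of d u] by (simp add: market_step_eq buy_in_states)

lemma measurable_market_step:
  assumes d: "d \<in> states"
  shows "(\<lambda>x. step d (fst x) (snd x)) \<in> measurable (borel \<Otimes>\<^sub>M borel) (count_space states)"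
proof -
  have "(\<lambda>x. (\<lambda>i x. if snd x < q i then buy d i else d) (tried d (fst x)) x)
          \<in> measurable (borel \<Otimes>\<^sub>M borel) (count_space states)"
  proof (rule measurable_compose_countable'[where I = "{1..n}" and g = "\<lambda>x. tried d (fst x)"
        and f = "\<lambda>i x. if snd x < q i then buy d i else d"])
    fix i assume i: "i \<in> {1..n}"
    show "(\<lambda>x. if snd x < q i then buy d i else d) \<in> measurable (borel \<Otimes>\<^sub>M borel) (count_space states)"
    proof (rule measurable_If)
      show "{x \<in> space (borel \<Otimes>\<^sub>M borel). snd x < q i} \<in> sets (borel \<Otimes>\<^sub>M borel)"
        by measurable
    qed (use buy_in_states[OF d i] d in \<open>auto intro!: measurable_const\<close>)
  next
    show "(\<lambda>x. tried d (fst x)) \<in> measurable (borel \<Otimes>\<^sub>M borel) (count_space {1..n})"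
      by measurable
  qed simp
  then show ?thesis by (simp add: market_step_eq)
qed

lemma measurable_market_step_fun:
  fixes f :: "(nat \<Rightarrow> nat) \<Rightarrow> ennreal"
  assumes "d \<in> states"
  shows "(\<lambda>x. f (step d (fst x) (snd x))) \<in> borel_measurable (borel \<Otimes>\<^sub>M borel)"
  using measurable_comp[OF measurable_market_step[OF assms], of f] by (simp add: comp_def)

definition expected_next :: "((nat \<Rightarrow> nat) \<Rightarrow> ennreal) \<Rightarrow> (nat \<Rightarrow> nat) \<Rightarrow> ennreal" where
  "expected_next f d = (\<Sum>i\<in>{1..n}. ennreal (trial_weight d i / weight_total n v A d) *
       (ennreal (q i) * f (buy d i) + ennreal (1 - q i) * f d))"

lemma nn_integral_purchase_decision:
  assumes i: "i \<in> {1..n}"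
  shows "(\<integral>\<^sup>+w. f (if w < q i then buy d i else d) \<partial>unif01) =
           ennreal (q i) * f (buy d i) + ennreal (1 - q i) * f d"
proof -
  have "(\<integral>\<^sup>+w. f (if w < q i then buy d i else d) \<partial>unif01) =
     (\<integral>\<^sup>+w. f (buy d i) * indicator {w. w < q i} w + f d * indicator {w. \<not> w < q i} w \<partial>unif01)"
    by (intro nn_integral_cong) (auto split: split_indicator)
  also have "\<dots> = f (buy d i) * emeasure unif01 {w. w < q i} + f d * emeasure unif01 {w. \<not> w < q i}"
    by (subst nn_integral_add) (auto simp: nn_integral_cmult_indicator)
  also have "\<dots> = ennreal (q i) * f (buy d i) + ennreal (1 - q i) * f d"
    using quality_bounds[OF i]
    by (simp del: emeasure_uniform_measure add: emeasure_unif01_less emeasure_unif01_ge mult.commute)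
  finally show ?thesis .
qed

lemma nn_integral_step: "(\<integral>\<^sup>+u. \<integral>\<^sup>+w. f (step d u w) \<partial>unif01 \<partial>unif01) = expected_next f d"
proof -
  define h where "h i = ennreal (q i) * f (buy d i) + ennreal (1 - q i) * f d" for i
  have "(\<integral>\<^sup>+u. \<integral>\<^sup>+w. f (step d u w) \<partial>unif01 \<partial>unif01) = (\<integral>\<^sup>+u. h (tried d u) \<partial>unif01)"
    using tried_product_in_interval
    by (intro nn_integral_cong) (simp add: market_step_eq h_def nn_integral_purchase_decision)
  also have "\<dots> = (\<integral>\<^sup>+u. (\<Sum>i\<in>{1..n}. h i * indicator {u. tried d u = i} u) \<partial>unif01)"
  proof (intro nn_integral_cong)
    fix u
    have "(\<Sum>i\<in>{1..n}. h i * indicator {u. tried d u = i} u) = (\<Sum>i\<in>{1..n}. if i = tried d u then h i else 0)"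
      by (intro sum.cong) (auto split: split_indicator)
    also have "\<dots> = h (tried d u)" using tried_product_in_interval by (simp add: sum.delta')
    finally show "h (tried d u) = (\<Sum>i\<in>{1..n}. h i * indicator {u. tried d u = i} u)" by simp
  qed
  also have "\<dots> = (\<Sum>i\<in>{1..n}. \<integral>\<^sup>+u. h i * indicator {u. tried d u = i} u \<partial>unif01)"
    using sets_tried_product by (intro nn_integral_sum) simp
  also have "\<dots> = (\<Sum>i\<in>{1..n}. h i * emeasure unif01 {u. tried d u = i})"
    using sets_tried_product by (intro sum.cong refl nn_integral_cmult_indicator) simp
  also have "\<dots> = expected_next f d"
    unfolding expected_next_def h_def
    by (intro sum.cong refl) (simp del: emeasure_uniform_measure add: emeasure_tried_product mult.commute)
  finally show ?thesis .
qed

definition drift :: "((nat \<Rightarrow> nat) \<Rightarrow> real) \<Rightarrow> (nat \<Rightarrow> nat) \<Rightarrow> real" where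
  "drift F d = (\<Sum>i\<in>{1..n}. trial_weight d i * q i * (F (buy d i) - F d))"

lemma expected_next_real:
  assumes F0: "\<And>d. 0 \<le> F d"
  shows "expected_next (\<lambda>d. ennreal (F d)) d = ennreal (F d + drift F d / weight_total n v A d)"
proof -
  let ?W = "weight_total n v A d"
  let ?p = "\<lambda>i. trial_weight d i / ?W"
  let ?g = "\<lambda>i. ?p i * (q i * F (buy d i) + (1 - q i) * F d)"
  have p0: "0 \<le> ?p i" if "i \<in> {1..n}" for i
    using trial_weight_pos[OF that, of d] weight_total_pos[of d] by simp
  have "expected_next (\<lambda>d. ennreal (F d)) d = (\<Sum>i\<in>{1..n}. ennreal (?g i))"
    unfolding expected_next_def
  proof (intro sum.cong refl)
    fix i assume i: "i \<in> {1..n}"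
    show "ennreal (?p i) * (ennreal (q i) * ennreal (F (buy d i)) + ennreal (1 - q i) * ennreal (F d)) =
          ennreal (?g i)"
      using quality_bounds[OF i] p0[OF i] F0[of d] F0[of "buy d i"]
      by (simp add: ennreal_mult[symmetric] ennreal_plus[symmetric] del: ennreal_plus)
  qed
  also have "\<dots> = ennreal (\<Sum>i\<in>{1..n}. ?g i)"
  proof (rule sum_ennreal)
    fix i assume i: "i \<in> {1..n}"
    show "0 \<le> ?g i"
      using quality_bounds[OF i] p0[OF i] F0[of d] F0[of "buy d i"]
      by (intro mult_nonneg_nonneg add_nonneg_nonneg) auto
  qed
  also have "(\<Sum>i\<in>{1..n}. ?g i) = (\<Sum>i\<in>{1..n}. ?p i * F d + trial_weight d i * q i * (F (buy d i) - F d) / ?W)"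
    by (intro sum.cong refl) (simp add: algebra_simps add_divide_distrib diff_divide_distrib)
  also have "\<dots> = (\<Sum>i\<in>{1..n}. ?p i) * F d + drift F d / ?W"
    by (simp add: sum.distrib sum_distrib_right sum_divide_distrib drift_def)
  also have "(\<Sum>i\<in>{1..n}. ?p i) = 1"
    using weight_total_pos[of d] by (simp add: sum_divide_distrib[symmetric] weight_total_eq)
  finally show ?thesis by simp
qed

definition purchases :: "(nat \<Rightarrow> nat) \<Rightarrow> nat" where
  "purchases d = (\<Sum>j\<in>{1..n}. d j)"

lemma purchases_buy: "i \<in> {1..n} \<Longrightarrow> purchases (buy d i) = Suc (purchases d)"
proof -
  assume i: "i \<in> {1..n}"
  have "purchases (buy d i) = (\<Sum>j\<in>{1..n}. d j + (if j = i then 1 else 0))"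
    unfolding purchases_def by (intro sum.cong) auto
  also have "\<dots> = Suc (purchases d)" using i by (simp add: sum.distrib purchases_def)
  finally show ?thesis .
qed

definition weight_bound :: "nat \<Rightarrow> real" where
  "weight_bound N = (\<Sum>j\<in>{1..n}. v j * (A j + real N))"

definition first_buy_bound :: "nat \<Rightarrow> real" where
  "first_buy_bound N = v 1 * A 1 * q 1 / weight_bound N"

lemma weight_bound_ge: "v 1 * A 1 \<le> weight_bound N"
proof -
  have "v 1 * A 1 \<le> v 1 * (A 1 + real N)" using visibility_pos[OF first_product] by simp
  also have "\<dots> \<le> weight_bound N" unfolding weight_bound_def
  proof (rule member_le_sum[OF first_product])
    fix j assume "j \<in> {1..n} - {1}"
    then show "0 \<le> v j * (A j + real N)" using visibility_pos[of j] A_pos[of j] by simp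
  qed simp
  finally show ?thesis .
qed

lemma v1_A1_pos: "v 1 * A 1 > 0"
  using visibility_pos[OF first_product] A_pos[of 1] n2 by auto

lemma first_buy_bound_pos: "first_buy_bound N > 0"
  using v1_A1_pos q1_pos weight_bound_ge[of N] unfolding first_buy_bound_def by simp

lemma first_buy_bound_le_1: "first_buy_bound N \<le> 1"
proof -
  have "first_buy_bound N \<le> v 1 * A 1 / weight_bound N"
    unfolding first_buy_bound_def using q1 v1_A1_pos weight_bound_ge[of N]
    by (intro divide_right_mono mult_left_le) auto
  also have "\<dots> \<le> 1" using weight_bound_ge[of N] v1_A1_pos by simp
  finally show ?thesis .
qed

lemma first_buy_prob_ge:
  assumes "purchases d \<le> N"
  shows "first_buy_bound N \<le> trial_weight d 1 * q 1 / weight_total n v A d"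
proof -
  have "d j \<le> N" if "j \<in> {1..n}" for j
    using member_le_sum[of j "{1..n}" d] that assms unfolding purchases_def by auto
  then have "weight_total n v A d \<le> weight_bound N"
    unfolding weight_total_def weight_bound_def
    by (intro sum_mono mult_left_mono) (auto intro!: less_imp_le[OF visibility_pos])
  moreover have "v 1 * A 1 \<le> trial_weight d 1"
    unfolding trial_weight_def using visibility_pos[OF first_product] by simp
  ultimately have "v 1 * A 1 / weight_bound N \<le> trial_weight d 1 / weight_total n v A d"
    using v1_A1_pos weight_total_pos[of d] by (intro frac_le) auto
  then show ?thesis
    unfolding first_buy_bound_def using q1_pos by (auto dest: mult_right_mono[of _ _ "q 1"])
qed

lemma drift_le_of_halving:
  assumes F0: "\<And>d. 0 \<le> F d" and half: "\<And>i. i \<in> {1..n} \<Longrightarrow> F (buy d i) \<le> F d / 2"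
  shows "drift F d \<le> - (trial_weight d 1 * q 1 * F d / 2)"
proof -
  let ?c = "\<lambda>i. trial_weight d i * q i"
  have c0: "0 \<le> ?c i" if "i \<in> {1..n}" for i
    using trial_weight_pos[OF that, of d] quality_bounds[OF that] by simp
  have decrease: "?c i * (F (buy d i) - F d) \<le> - (?c i * F d / 2)" if "i \<in> {1..n}" for i
    using mult_left_mono[of "F (buy d i) - F d" "- F d / 2" "?c i"] half[OF that] c0[OF that] by simp
  have "drift F d = ?c 1 * (F (buy d 1) - F d) + (\<Sum>i\<in>{1..n} - {1}. ?c i * (F (buy d i) - F d))"
    unfolding drift_def by (rule sum.remove[OF _ first_product]) simp
  also have "(\<Sum>i\<in>{1..n} - {1}. ?c i * (F (buy d i) - F d)) \<le> 0"
  proof (rule sum_nonpos)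
    fix i assume "i \<in> {1..n} - {1}"
    then have i: "i \<in> {1..n}" by simp
    have "0 \<le> ?c i * F d / 2" using c0[OF i] F0[of d] by simp
    then show "?c i * (F (buy d i) - F d) \<le> 0" using decrease[OF i] by linarith
  qed
  finally show ?thesis using decrease[OF first_product] by linarith
qed

definition purchase_potential :: "nat \<Rightarrow> (nat \<Rightarrow> nat) \<Rightarrow> real" where
  "purchase_potential N d = (if purchases d \<le> N then (1/2) ^ purchases d else 0)"

lemma expected_next_purchase_potential:
  "expected_next (\<lambda>d. ennreal (purchase_potential N d)) d \<le>
     ennreal (1 - first_buy_bound N / 2) * ennreal (purchase_potential N d)"
proof -
  let ?F = "purchase_potential N"
  let ?W = "weight_total n v A d"
  have F0: "0 \<le> ?F d'" for d' unfolding purchase_potential_def by simp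
  have "drift ?F d \<le> - (trial_weight d 1 * q 1 * ?F d / 2)"
    by (rule drift_le_of_halving[OF F0]) (auto simp: purchase_potential_def purchases_buy)
  then have "drift ?F d / ?W \<le> - (trial_weight d 1 * q 1 * ?F d / 2) / ?W"
    by (rule divide_right_mono) (use weight_total_pos[of d] in simp)
  also have "\<dots> = - (trial_weight d 1 * q 1 / ?W) * (?F d / 2)"
    by simp
  also have "\<dots> \<le> - first_buy_bound N * (?F d / 2)"
  proof (cases "purchases d \<le> N")
    case True
    then show ?thesis using first_buy_prob_ge[OF True] F0[of d] by (intro mult_right_mono) auto
  qed (simp add: purchase_potential_def)
  finally have "?F d + drift ?F d / ?W \<le> (1 - first_buy_bound N / 2) * ?F d"
    by (simp add: algebra_simps)
  then have "expected_next (\<lambda>d. ennreal (?F d)) d \<le> ennreal ((1 - first_buy_bound N / 2) * ?F d)"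
    unfolding expected_next_real[OF F0] by (rule ennreal_leI)
  also have "\<dots> = ennreal (1 - first_buy_bound N / 2) * ennreal (?F d)"
    using first_buy_bound_le_1[of N] F0[of d] by (intro ennreal_mult) auto
  finally show ?thesis .
qed

lemma expected_next_le_of_drift_nonpos:
  assumes "\<And>d. 0 \<le> F d" and "drift F d \<le> 0"
  shows "expected_next (\<lambda>d. ennreal (F d)) d \<le> ennreal (F d)"
  unfolding expected_next_real[OF assms(1)]
  using assms(2) weight_total_pos[of d] by (intro ennreal_leI) (simp add: divide_nonpos_pos)

definition strength_ratio :: "nat \<Rightarrow> real" where
  "strength_ratio i = v i * q i / (v 1 * q 1)"

definition lyap_exp :: real where
  "lyap_exp = min 1 (A 1 / 2)"

definition growth_exp :: "nat \<Rightarrow> real" where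
  "growth_exp i = (1 + strength_ratio i) / 2"

definition decay_exp :: "nat \<Rightarrow> real" where
  "decay_exp i = lyap_exp * growth_exp i"

definition lyap_threshold :: "nat \<Rightarrow> real" where
  "lyap_threshold i = strength_ratio i / (growth_exp i - strength_ratio i) + 1"

text \<open>Above the threshold, replacing \<open>x\<close> by \<open>x + 1\<close> multiplies \<open>x powr (- decay_exp i)\<close> by at most
  \<open>1 - lyap_exp * strength_ratio i / x\<close>. Below it the factor \<open>2 powr (\<dots>)\<close> halves at each step,
  which is enough because \<open>lyap_exp \<le> A 1 / 2\<close>.\<close>

definition lyap_weight :: "nat \<Rightarrow> real \<Rightarrow> real" where
  "lyap_weight i x = x powr (- decay_exp i) * 2 powr (max 0 (lyap_threshold i - x))"

definition lyapunov :: "nat \<Rightarrow> (nat \<Rightarrow> nat) \<Rightarrow> real" where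
  "lyapunov i d = (A i + real (d i)) powr lyap_exp * lyap_weight i (A 1 + real (d 1))"

lemma v1_q1_pos: "v 1 * q 1 > 0"
  using visibility_pos[OF first_product] q1_pos by simp

lemma A1_pos: "A 1 > 0"
  using A_pos[of 1] n2 by simp

lemma strength_ratio_bounds:
  assumes i: "i \<in> {2..n}"
  shows "0 \<le> strength_ratio i" "strength_ratio i < 1"
proof -
  have v: "0 < v i" "v i \<le> v 1" using visibility_pos[of i] v_mono[of 1 i] i by auto
  have q: "0 \<le> q i" "q i < q 1" using quality_bounds[of i] q_strict[of 1 i] i by auto
  show "0 \<le> strength_ratio i" unfolding strength_ratio_def using v q v1_q1_pos by simp
  have "v i * q i \<le> v 1 * q i" using v q by (intro mult_right_mono) auto
  also have "\<dots> < v 1 * q 1" using q visibility_pos[OF first_product] by simp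
  finally show "strength_ratio i < 1" unfolding strength_ratio_def using v1_q1_pos by simp
qed

lemma lyap_exp_bounds: "0 < lyap_exp" "lyap_exp \<le> 1" "lyap_exp \<le> A 1 / 2"
  unfolding lyap_exp_def using A1_pos by auto

lemma growth_exp_bounds:
  assumes "i \<in> {2..n}"
  shows "strength_ratio i < growth_exp i" "growth_exp i < 1" "0 < growth_exp i"
  using strength_ratio_bounds[OF assms] unfolding growth_exp_def by auto

lemma decay_exp_bounds:
  assumes "i \<in> {2..n}"
  shows "0 < decay_exp i" "decay_exp i \<le> 1"
  using growth_exp_bounds[OF assms] lyap_exp_bounds mult_le_one[of lyap_exp "growth_exp i"]
  unfolding decay_exp_def by auto

lemma lyap_weight_pos: "x > 0 \<Longrightarrow> lyap_weight i x > 0"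
  unfolding lyap_weight_def by simp

lemma lyap_weight_ge: "x > 0 \<Longrightarrow> x powr (- decay_exp i) \<le> lyap_weight i x"
  unfolding lyap_weight_def by (auto intro: ge_one_powr_ge_zero)

lemma lyap_exp_strength_ratio_le_half:
  assumes i: "i \<in> {2..n}" and x: "A 1 \<le> x"
  shows "lyap_exp * strength_ratio i / x \<le> 1 / 2"
proof -
  have "lyap_exp * strength_ratio i \<le> x / 2"
    using strength_ratio_bounds[OF i] lyap_exp_bounds x mult_left_le[of "strength_ratio i" lyap_exp]
    by linarith
  then show ?thesis using x A1_pos by (simp add: divide_le_eq)
qed

lemma lyap_exp_strength_ratio_le_above_threshold:
  assumes i: "i \<in> {2..n}" and x: "0 < x" "lyap_threshold i < x + 1"
  shows "lyap_exp * strength_ratio i / x \<le> decay_exp i / (x + 1)"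
proof -
  let ?\<gamma> = "strength_ratio i"
  have "?\<gamma> / (growth_exp i - ?\<gamma>) < x" using x unfolding lyap_threshold_def by simp
  then have "?\<gamma> < x * (growth_exp i - ?\<gamma>)"
    using growth_exp_bounds[OF i] by (simp add: divide_less_eq mult.commute)
  then have "lyap_exp * (?\<gamma> * (x + 1)) \<le> lyap_exp * (growth_exp i * x)"
    using lyap_exp_bounds by (intro mult_left_mono) (auto simp: algebra_simps)
  then show ?thesis
    unfolding decay_exp_def using x by (simp add: divide_simps algebra_simps)
qed

lemma lyap_weight_Suc_le:
  assumes i: "i \<in> {2..n}" and x: "A 1 \<le> x"
  shows "lyap_weight i (x + 1) \<le> lyap_weight i x * (1 - lyap_exp * strength_ratio i / x)"
proof -
  let ?\<gamma> = "strength_ratio i" and ?p = "lyap_exp" and ?s = "decay_exp i"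
  have xp: "x > 0" using x A1_pos by linarith
  have s: "0 < ?s" "?s \<le> 1" by (rule decay_exp_bounds[OF i])+
  have small: "?p * ?\<gamma> / x \<le> 1 / 2" by (rule lyap_exp_strength_ratio_le_half[OF i x])
  show ?thesis
  proof (cases "x + 1 \<le> lyap_threshold i")
    case True
    then have "max 0 (lyap_threshold i - (x + 1)) = (lyap_threshold i - x) - 1"
      "max 0 (lyap_threshold i - x) = lyap_threshold i - x" by auto
    then have "lyap_weight i (x + 1) = (x + 1) powr (- ?s) * (2 powr (lyap_threshold i - x) / 2)"
      unfolding lyap_weight_def by (simp add: powr_diff)
    also have "\<dots> \<le> x powr (- ?s) * (2 powr (lyap_threshold i - x) / 2)"
      using s xp by (intro mult_right_mono powr_mono2') auto
    also have "\<dots> = lyap_weight i x * (1 / 2)"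
      using \<open>max 0 (lyap_threshold i - x) = lyap_threshold i - x\<close> unfolding lyap_weight_def by simp
    also have "\<dots> \<le> lyap_weight i x * (1 - ?p * ?\<gamma> / x)"
      using small lyap_weight_pos[OF xp, of i] by (intro mult_left_mono) auto
    finally show ?thesis .
  next
    case False
    then have "?p * ?\<gamma> / x \<le> ?s / (x + 1)"
      using lyap_exp_strength_ratio_le_above_threshold[OF i xp] by simp
    then have "x powr (- ?s) * (1 - ?s / (x + 1)) \<le> x powr (- ?s) * (1 - ?p * ?\<gamma> / x)"
      by (intro mult_left_mono) auto
    with powr_minus_Suc_le[OF xp less_imp_le[OF s(1)] s(2)]
    have "(x + 1) powr (- ?s) \<le> x powr (- ?s) * (1 - ?p * ?\<gamma> / x)"
      by (rule order_trans)
    also have "\<dots> \<le> lyap_weight i x * (1 - ?p * ?\<gamma> / x)"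
    proof (rule mult_right_mono)
      show "0 \<le> 1 - ?p * ?\<gamma> / x" using small by linarith
    qed (rule lyap_weight_ge[OF xp])
    finally show ?thesis using False unfolding lyap_weight_def by simp
  qed
qed

lemma lyapunov_nonneg: "0 \<le> lyapunov i d"
  unfolding lyapunov_def lyap_weight_def by simp

lemma drift_lyapunov_nonpos:
  assumes i: "i \<in> {2..n}"
  shows "drift (lyapunov i) d \<le> 0"
proof -
  have i1: "i \<noteq> 1" "i \<in> {1..n}" using i by auto
  define f where "f j = trial_weight d j * q j * (lyapunov i (buy d j) - lyapunov i d)" for j
  define a where "a = A i + real (d i)"
  define b where "b = A 1 + real (d 1)"
  have a: "a > 0" unfolding a_def using A_pos[of i] i by (simp add: add_pos_nonneg)
  have b: "A 1 \<le> b" "b > 0" unfolding b_def using A1_pos by (auto simp: add_pos_nonneg)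
  have ne: "v 1 \<noteq> 0" "q 1 \<noteq> 0" using v1_q1_pos by auto
  have L: "lyapunov i d = a powr lyap_exp * lyap_weight i b"
    "lyapunov i (buy d 1) = a powr lyap_exp * lyap_weight i (b + 1)"
    "lyapunov i (buy d i) = (a + 1) powr lyap_exp * lyap_weight i b"
    unfolding lyapunov_def a_def b_def using i1 by (simp_all add: ac_simps)
  have w: "trial_weight d 1 = v 1 * b" "trial_weight d i = v i * a"
    unfolding trial_weight_def a_def b_def by simp_all
  have "f j = 0" if "j \<notin> {1, i}" for j
    using that unfolding f_def lyapunov_def by simp
  then have "drift (lyapunov i) d = (\<Sum>j\<in>{1, i}. f j)"
    unfolding drift_def f_def[symmetric] using i1 first_product
    by (intro sum.mono_neutral_right) auto
  then have drift_eq: "drift (lyapunov i) d = f 1 + f i" using i1 by simp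
  have "f 1 \<le> - (v i * q i * lyap_exp * a powr lyap_exp * lyap_weight i b)"
  proof -
    have "f 1 = v 1 * q 1 * b * a powr lyap_exp * (lyap_weight i (b + 1) - lyap_weight i b)"
      unfolding f_def L w by (simp add: algebra_simps)
    also have "\<dots> \<le> v 1 * q 1 * b * a powr lyap_exp *
        (lyap_weight i b * (1 - lyap_exp * strength_ratio i / b) - lyap_weight i b)"
      using lyap_weight_Suc_le[OF i b(1)] v1_q1_pos b by (intro mult_left_mono) auto
    also have "\<dots> = - (v i * q i * lyap_exp * a powr lyap_exp * lyap_weight i b)"
      using b ne by (simp add: strength_ratio_def field_simps)
    finally show ?thesis .
  qed
  moreover have "f i \<le> v i * q i * lyap_exp * a powr lyap_exp * lyap_weight i b"
  proof -
    have "f i = v i * q i * lyap_weight i b * (a * ((a + 1) powr lyap_exp - a powr lyap_exp))"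
      unfolding f_def L w by (simp add: algebra_simps)
    also have "\<dots> \<le> v i * q i * lyap_weight i b * (lyap_exp * a powr lyap_exp)"
      using powr_Suc_increment_le[OF a, of lyap_exp] lyap_exp_bounds lyap_weight_pos[OF b(2), of i]
        visibility_pos[OF i1(2)] quality_bounds[OF i1(2)]
      by (intro mult_left_mono) auto
    finally show ?thesis by (simp add: algebra_simps)
  qed
  ultimately show ?thesis unfolding drift_eq by linarith
qed

lemma lyapunov_bound:
  assumes i: "i \<in> {2..n}" and bounded: "lyapunov i d < C"
  shows "A i + real (d i) \<le> C powr (1 / lyap_exp) * (A 1 + real (d 1)) powr growth_exp i"
proof -
  define a where "a = A i + real (d i)"
  define b where "b = A 1 + real (d 1)"
  have a: "a > 0" unfolding a_def using A_pos[of i] i by (simp add: add_pos_nonneg)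
  have b: "b > 0" unfolding b_def using A1_pos by (simp add: add_pos_nonneg)
  have p: "0 < lyap_exp" by (rule lyap_exp_bounds)
  have "a powr lyap_exp * b powr (- decay_exp i) \<le> lyapunov i d"
    unfolding lyapunov_def a_def[symmetric] b_def[symmetric]
    using lyap_weight_ge[OF b, of i] by (intro mult_left_mono) auto
  then have "a powr lyap_exp * b powr (- decay_exp i) < C" using bounded by linarith
  then have "a powr lyap_exp * b powr (- decay_exp i) * b powr decay_exp i < C * b powr decay_exp i"
    using b by (intro mult_strict_right_mono) auto
  moreover have "b powr (- decay_exp i) * b powr decay_exp i = 1"
    using b by (simp add: powr_add[symmetric])
  ultimately have less: "a powr lyap_exp < C * b powr decay_exp i"
    by (simp add: mult.assoc)
  then have "0 < C * b powr decay_exp i" using a powr_gt_zero[of a lyap_exp] by linarith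
  then have C: "C > 0" using b by (simp add: zero_less_mult_iff)
  have "a = (a powr lyap_exp) powr (1 / lyap_exp)" using a p by (simp add: powr_powr)
  also have "\<dots> \<le> (C * b powr decay_exp i) powr (1 / lyap_exp)"
    using less p by (intro powr_mono2) auto
  also have "\<dots> = C powr (1 / lyap_exp) * b powr growth_exp i"
    using C b p by (simp add: powr_mult powr_powr decay_exp_def)
  finally show ?thesis unfolding a_def b_def .
qed

lemma purchases_split: "real (purchases d) = real (d 1) + (\<Sum>i\<in>{2..n}. real (d i))"
proof -
  have "{1..n} = insert 1 {2..n}" using n2 by auto
  then show ?thesis unfolding purchases_def by (simp add: of_nat_sum)
qed

lemma first_purchases_tendsto_infinity:
  fixes dd :: "nat \<Rightarrow> nat \<Rightarrow> nat" and K :: "nat \<Rightarrow> real"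
  assumes mono: "\<And>t. dd t 1 \<le> dd (Suc t) 1"
    and unbounded: "\<And>N. \<exists>t. N < purchases (dd t)"
    and K: "\<And>i. 0 \<le> K i"
    and bound: "\<And>i t. i \<in> {2..n} \<Longrightarrow> real (dd t i) \<le> K i * (A 1 + real (dd t 1)) powr growth_exp i"
  shows "filterlim (\<lambda>t. real (dd t 1)) at_top sequentially"
proof -
  have "\<exists>t. B < real (dd t 1)" for B
  proof (rule ccontr)
    assume "\<nexists>t. B < real (dd t 1)"
    then have le: "real (dd t 1) \<le> B" for t by (simp add: not_less)
    define S where "S = B + (\<Sum>i\<in>{2..n}. K i * (A 1 + B) powr growth_exp i)"
    have S: "real (purchases (dd t)) \<le> S" for t
      unfolding purchases_split S_def
    proof (rule add_mono[OF le sum_mono])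
      fix i assume i: "i \<in> {2..n}"
      have "0 \<le> A 1 + real (dd t 1)" using A1_pos by simp
      then have "(A 1 + real (dd t 1)) powr growth_exp i \<le> (A 1 + B) powr growth_exp i"
        using le[of t] growth_exp_bounds[OF i] by (intro powr_mono2) auto
      then show "real (dd t i) \<le> K i * (A 1 + B) powr growth_exp i"
        using bound[OF i, of t] mult_left_mono[OF _ K] by (meson order_trans)
    qed
    obtain t where "nat \<lceil>S\<rceil> < purchases (dd t)" using unbounded by blast
    then have "real (nat \<lceil>S\<rceil>) < real (purchases (dd t))" by simp
    then show False using real_nat_ceiling_ge[of S] S[of t] by linarith
  qed
  moreover have inc: "incseq (\<lambda>t. real (dd t 1))"
    using mono by (intro incseq_SucI) simp
  ultimately show ?thesis
    unfolding filterlim_at_top_dense eventually_sequentially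
    by (blast intro: order_less_le_trans incseqD[OF inc])
qed

lemma market_share_first_tendsto_1:
  fixes dd :: "nat \<Rightarrow> nat \<Rightarrow> nat"
  assumes first: "filterlim (\<lambda>t. real (dd t 1)) at_top sequentially"
    and others: "\<And>i. i \<in> {2..n} \<Longrightarrow> (\<lambda>t. real (dd t i) / real (dd t 1)) \<longlonglongrightarrow> 0"
  shows "(\<lambda>t. market_share n (dd t) 1) \<longlonglongrightarrow> 1"
proof -
  let ?r = "\<lambda>t. \<Sum>i\<in>{2..n}. real (dd t i) / real (dd t 1)"
  have "(\<lambda>t. 1 / (1 + ?r t)) \<longlonglongrightarrow> 1 / (1 + (\<Sum>i\<in>{2..n}. 0))"
    using others by (intro tendsto_intros) auto
  moreover have "\<forall>\<^sub>F t in sequentially. 1 / (1 + ?r t) = market_share n (dd t) 1"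
    using first unfolding filterlim_at_top_dense
  proof (rule eventually_mono[OF spec[of _ 0]])
    fix t assume pos: "0 < real (dd t 1)"
    define S where "S = (\<Sum>i\<in>{2..n}. real (dd t i))"
    have S: "0 \<le> S" unfolding S_def by (simp add: sum_nonneg)
    have r: "?r t = S / real (dd t 1)" unfolding S_def by (simp add: sum_divide_distrib)
    have "0 < real (dd t 1) + S" using pos S by linarith
    then have "1 / (1 + ?r t) = real (dd t 1) / (real (dd t 1) + S)"
      unfolding r using pos by (simp add: field_simps)
    also have "\<dots> = market_share n (dd t) 1"
      using purchases_split[of "dd t"] unfolding market_share_def S_def by (simp add: purchases_def)
    finally show "1 / (1 + ?r t) = market_share n (dd t) 1" .
  qed
  ultimately show ?thesis by (simp add: Lim_transform_eventually)
qed

theorem market_share_tendsto_1_of_lyapunov_bounded: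
  fixes dd :: "nat \<Rightarrow> nat \<Rightarrow> nat"
  assumes mono: "\<And>t. dd t 1 \<le> dd (Suc t) 1"
    and unbounded: "\<And>N. \<exists>t. N < purchases (dd t)"
    and bounded: "\<And>i. i \<in> {2..n} \<Longrightarrow> \<exists>C. \<forall>t. lyapunov i (dd t) < C"
  shows "(\<lambda>t. market_share n (dd t) 1) \<longlonglongrightarrow> 1"
proof -
  obtain C where C: "\<And>i t. i \<in> {2..n} \<Longrightarrow> lyapunov i (dd t) < C i"
    using bounded by metis
  have bound: "real (dd t i) \<le> C i powr (1 / lyap_exp) * (A 1 + real (dd t 1)) powr growth_exp i"
    if "i \<in> {2..n}" for i t
  proof -
    have "A i > 0" using A_pos[of i] that by simp
    then show ?thesis using lyapunov_bound[OF that C[OF that, of t]] by linarith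
  qed
  have first: "filterlim (\<lambda>t. real (dd t 1)) at_top sequentially"
    by (rule first_purchases_tendsto_infinity[OF mono unbounded _ bound]) simp
  show ?thesis
  proof (rule market_share_first_tendsto_1[where dd = dd, OF first])
    fix i assume i: "i \<in> {2..n}"
    show "(\<lambda>t. real (dd t i) / real (dd t 1)) \<longlonglongrightarrow> 0"
      using bound[OF i] growth_exp_bounds[OF i] A1_pos
      by (intro ratio_tendsto_zero_of_sublinear[OF first, where K = "C i powr (1 / lyap_exp)"
            and c = "A 1" and \<sigma> = "growth_exp i"]) auto
  qed
qed

end

locale random_market = quality_market n v A q + prob_space M for n v A q and M :: "'a measure" +
  fixes X :: "nat \<Rightarrow> bool \<Rightarrow> 'a \<Rightarrow> real"
  assumes indep: "indep_vars (\<lambda>_. borel) (\<lambda>(t, b). X t b) UNIV"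
    and unif: "\<And>t b. distr M borel (X t b) = uniform_measure lborel {0..1::real}"
begin

lemma measurable_X[measurable]: "X t b \<in> borel_measurable M"
  using indep unfolding indep_vars_def by auto

definition inputs :: "(nat \<times> bool) set \<Rightarrow> 'a \<Rightarrow> (nat \<times> bool \<Rightarrow> real)" where
  "inputs K \<omega> = restrict (\<lambda>i. (\<lambda>(t, b). X t b) i \<omega>) K"

lemma measurable_inputs[measurable]: "inputs K \<in> measurable M (PiM K (\<lambda>_. borel))"
  unfolding inputs_def by (rule measurable_restrict) (auto split: prod.split)

lemma nn_integral_X:
  assumes "h \<in> borel_measurable borel"
  shows "(\<integral>\<^sup>+\<omega>. h (X t b \<omega>) \<partial>M) = (\<integral>\<^sup>+u. h u \<partial>unif01)"
  using assms by (subst unif[of t b, symmetric], subst nn_integral_distr) simp_all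

lemma nn_integral_independent_input:
  assumes tb: "(t, b) \<notin> K"
    and g[measurable]: "(\<lambda>(x, u). g x u) \<in> borel_measurable (PiM K (\<lambda>_. borel) \<Otimes>\<^sub>M borel)"
  shows "(\<integral>\<^sup>+\<omega>. g (inputs K \<omega>) (X t b \<omega>) \<partial>M) = (\<integral>\<^sup>+\<omega>. (\<integral>\<^sup>+u. g (inputs K \<omega>) u \<partial>unif01) \<partial>M)"
proof -
  let ?PK = "PiM K (\<lambda>_. borel :: real measure)" and ?PT = "PiM {(t, b)} (\<lambda>_. borel :: real measure)"
  define R where "R = inputs {(t, b)}"
  have "indep_var ?PK (inputs K) ?PT R"
    using indep_var_restrict[OF indep, of K "{(t, b)}"] tb unfolding inputs_def R_def by auto
  then have eq: "distr M ?PK (inputs K) \<Otimes>\<^sub>M distr M ?PT R = distr M (?PK \<Otimes>\<^sub>M ?PT) (\<lambda>x. (inputs K x, R x))"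
    using indep_var_distribution_eq by auto
  have rvQ: "random_variable ?PK (inputs K)" by measurable
  have rvR: "random_variable ?PT R" unfolding R_def by measurable
  interpret PR: prob_space "distr M ?PT R" by (rule prob_space_distr[OF rvR])
  interpret U: prob_space unif01 by (rule prob_space_unif01)
  have Gm: "(\<lambda>(x, y). g x (y (t, b))) \<in> borel_measurable (?PK \<Otimes>\<^sub>M ?PT)"
    by measurable
  have RX: "R \<omega> (t, b) = X t b \<omega>" for \<omega> unfolding R_def inputs_def by simp
  have "(\<integral>\<^sup>+\<omega>. g (inputs K \<omega>) (X t b \<omega>) \<partial>M) = (\<integral>\<^sup>+\<omega>. (\<lambda>(x, y). g x (y (t, b))) (inputs K \<omega>, R \<omega>) \<partial>M)"
    by (simp add: RX)
  also have "\<dots> = (\<integral>\<^sup>+z. (\<lambda>(x, y). g x (y (t, b))) z \<partial>distr M (?PK \<Otimes>\<^sub>M ?PT) (\<lambda>x. (inputs K x, R x)))"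
    by (rule nn_integral_distr[symmetric]) (use Gm rvR in measurable)
  also have "\<dots> = (\<integral>\<^sup>+x. \<integral>\<^sup>+y. g x (y (t, b)) \<partial>distr M ?PT R \<partial>distr M ?PK (inputs K))"
    unfolding eq[symmetric] by (subst PR.nn_integral_fst[symmetric]) (use Gm in auto)
  also have "\<dots> = (\<integral>\<^sup>+x. \<integral>\<^sup>+u. g x u \<partial>unif01 \<partial>distr M ?PK (inputs K))"
  proof (rule nn_integral_cong)
    fix x assume "x \<in> space (distr M ?PK (inputs K))"
    then have gx: "(\<lambda>u. g x u) \<in> borel_measurable borel" using measurable_Pair2[OF g] by simp
    then have "(\<lambda>y. g x (y (t, b))) \<in> borel_measurable ?PT"
      using measurable_comp[OF measurable_component_singleton[of "(t, b)" "{(t, b)}" "\<lambda>_. borel"]]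
      by (simp add: comp_def)
    then show "(\<integral>\<^sup>+y. g x (y (t, b)) \<partial>distr M ?PT R) = (\<integral>\<^sup>+u. g x u \<partial>unif01)"
      using gx by (simp add: nn_integral_distr[OF rvR] RX nn_integral_X)
  qed
  also have "\<dots> = (\<integral>\<^sup>+\<omega>. (\<integral>\<^sup>+u. g (inputs K \<omega>) u \<partial>unif01) \<partial>M)"
    by (rule nn_integral_distr[OF rvQ]) measurable
  finally show ?thesis .
qed

definition traj_of_inputs :: "nat \<Rightarrow> (nat \<times> bool \<Rightarrow> real) \<Rightarrow> (nat \<Rightarrow> nat)" where
  "traj_of_inputs t Q = market_traj n v A q (\<lambda>s b. Q (s, b)) t"

definition traj :: "nat \<Rightarrow> 'a \<Rightarrow> (nat \<Rightarrow> nat)" where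
  "traj t \<omega> = market_traj n v A q (\<lambda>s b. X s b \<omega>) t"

abbreviation "past t \<equiv> {..<t} \<times> (UNIV :: bool set)"

lemma traj_eq_traj_of_inputs: "past t \<subseteq> K \<Longrightarrow> traj t \<omega> = traj_of_inputs t (inputs K \<omega>)"
  unfolding traj_def traj_of_inputs_def inputs_def by (rule market_traj_cong) auto

lemma traj_of_inputs_in_states: "traj_of_inputs t Q \<in> states"
  by (induction t) (auto simp: traj_of_inputs_def zero_in_states market_step_in_states)

lemma traj_in_states: "traj t \<omega> \<in> states"
  using traj_eq_traj_of_inputs[of t "past t" \<omega>] traj_of_inputs_in_states by simp

lemma traj_Suc: "traj (Suc t) \<omega> = step (traj t \<omega>) (X t True \<omega>) (X t False \<omega>)"
  by (simp add: traj_def)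

lemma measurable_traj_of_inputs:
  "past t \<subseteq> K \<Longrightarrow> traj_of_inputs t \<in> measurable (PiM K (\<lambda>_. borel)) (count_space states)"
proof (induction t)
  case 0
  then show ?case using zero_in_states by (simp add: traj_of_inputs_def)
next
  case (Suc t)
  then have IH: "traj_of_inputs t \<in> measurable (PiM K (\<lambda>_. borel)) (count_space states)"
    by (auto simp: subset_eq)
  have tb: "(t, True) \<in> K" "(t, False) \<in> K" using Suc.prems by auto
  have "(\<lambda>Q. (\<lambda>d Q. step d (Q (t, True)) (Q (t, False))) (traj_of_inputs t Q) Q)
          \<in> measurable (PiM K (\<lambda>_. borel)) (count_space states)"
  proof (rule measurable_compose_countable'[OF _ IH countable_states])
    fix d assume d: "d \<in> states"
    have "(\<lambda>x. step d (fst x) (snd x)) \<circ> (\<lambda>Q. (Q (t, True), Q (t, False)))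
            \<in> measurable (PiM K (\<lambda>_. borel)) (count_space states)"
      by (rule measurable_comp[OF _ measurable_market_step[OF d]]) (use tb in measurable)
    then show "(\<lambda>Q. step d (Q (t, True)) (Q (t, False))) \<in> measurable (PiM K (\<lambda>_. borel)) (count_space states)"
      by (simp add: comp_def)
  qed
  then show ?case by (simp add: traj_of_inputs_def)
qed

lemma measurable_traj: "traj t \<in> measurable M (count_space states)"
proof -
  have "traj_of_inputs t \<circ> inputs (past t) \<in> measurable M (count_space states)"
    by (rule measurable_comp[OF measurable_inputs measurable_traj_of_inputs]) simp
  moreover have "traj_of_inputs t \<circ> inputs (past t) = traj t"
    using traj_eq_traj_of_inputs[of t "past t"] by (auto simp: fun_eq_iff)
  ultimately show ?thesis by simp
qed

lemma borel_measurable_traj_fun: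
  fixes f :: "(nat \<Rightarrow> nat) \<Rightarrow> ennreal"
  shows "(\<lambda>\<omega>. f (traj t \<omega>)) \<in> borel_measurable M"
proof -
  have "f \<in> borel_measurable (count_space states)" by (simp add: measurable_count_space_eq1)
  from measurable_comp[OF measurable_traj this] show ?thesis by (simp add: comp_def)
qed

lemma sets_traj_pred: "{\<omega> \<in> space M. P (traj t \<omega>)} \<in> sets M"
proof -
  have "{\<omega> \<in> space M. P (traj t \<omega>)} = traj t -` {d \<in> states. P d} \<inter> space M"
    using traj_in_states by auto
  also have "\<dots> \<in> sets M" by (rule measurable_sets[OF measurable_traj]) auto
  finally show ?thesis .
qed

lemma sets_traj_of_inputs_pred:
  assumes "past t \<subseteq> K"
  shows "{Q \<in> space (PiM K (\<lambda>_. borel)). P (traj_of_inputs t Q)} \<in> sets (PiM K (\<lambda>_. borel))"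
proof -
  have "{Q \<in> space (PiM K (\<lambda>_. borel)). P (traj_of_inputs t Q)} =
          traj_of_inputs t -` {d \<in> states. P d} \<inter> space (PiM K (\<lambda>_. borel))"
    using traj_of_inputs_in_states by auto
  also have "\<dots> \<in> sets (PiM K (\<lambda>_. borel))"
    by (rule measurable_sets[OF measurable_traj_of_inputs[OF assms]]) auto
  finally show ?thesis .
qed

lemma borel_measurable_nn_integral_step:
  fixes f :: "(nat \<Rightarrow> nat) \<Rightarrow> ennreal"
  assumes d: "d \<in> states"
  shows "(\<lambda>u. \<integral>\<^sup>+w. f (step d u w) \<partial>unif01) \<in> borel_measurable borel"
proof -
  interpret U: prob_space unif01 by (rule prob_space_unif01)
  have "sets (borel \<Otimes>\<^sub>M unif01) = sets (borel \<Otimes>\<^sub>M (borel :: real measure))"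
    by (intro sets_pair_measure_cong) auto
  then have "(\<lambda>(u, w). f (step d u w)) \<in> borel_measurable (borel \<Otimes>\<^sub>M unif01)"
    using measurable_market_step_fun[OF d, of f]
    by (subst measurable_cong_sets[OF _ refl]) (auto simp: case_prod_beta')
  then show ?thesis by (rule U.borel_measurable_nn_integral)
qed

lemma borel_measurable_purchase_integrand:
  fixes f :: "(nat \<Rightarrow> nat) \<Rightarrow> ennreal" and G :: "(nat \<times> bool \<Rightarrow> real) \<Rightarrow> ennreal"
  assumes sub: "past t \<subseteq> K" and tT: "(t, True) \<in> K"
    and G: "G \<in> borel_measurable (PiM (past t) (\<lambda>_. borel))"
  shows "(\<lambda>(x, w). G (restrict x (past t)) * f (step (traj_of_inputs t x) (x (t, True)) w))
           \<in> borel_measurable (PiM K (\<lambda>_. borel) \<Otimes>\<^sub>M borel)"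
proof -
  let ?h = "\<lambda>d p. G (restrict (fst p) (past t)) * f (step d (fst p (t, True)) (snd p))"
  have "(\<lambda>p. ?h (traj_of_inputs t (fst p)) p) \<in> borel_measurable (PiM K (\<lambda>_. borel) \<Otimes>\<^sub>M borel)"
  proof (rule measurable_compose_countable'[where f = ?h, OF _ _ countable_states])
    fix d assume d: "d \<in> states"
    have "(\<lambda>p. G (restrict (fst p) (past t))) \<in> borel_measurable (PiM K (\<lambda>_. borel) \<Otimes>\<^sub>M borel)"
      using measurable_comp[OF measurable_comp[OF measurable_fst measurable_restrict_subset[OF sub]] G]
      by (simp add: comp_def)
    moreover have "(\<lambda>x. f (step d (fst x) (snd x))) \<circ> (\<lambda>p. (fst p (t, True), snd p))
        \<in> borel_measurable (PiM K (\<lambda>_. borel) \<Otimes>\<^sub>M borel)"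
      by (rule measurable_comp[OF _ measurable_market_step_fun[OF d]]) (use tT in measurable)
    ultimately show "(\<lambda>p. ?h d p) \<in> borel_measurable (PiM K (\<lambda>_. borel) \<Otimes>\<^sub>M borel)"
      by (auto simp: comp_def intro!: borel_measurable_times_ennreal)
  next
    show "(\<lambda>p. traj_of_inputs t (fst p)) \<in> measurable (PiM K (\<lambda>_. borel) \<Otimes>\<^sub>M borel) (count_space states)"
      using measurable_comp[OF measurable_fst measurable_traj_of_inputs[OF sub]] by (simp add: comp_def)
  qed
  then show ?thesis by (simp add: case_prod_beta')
qed

lemma borel_measurable_trial_integrand:
  fixes f :: "(nat \<Rightarrow> nat) \<Rightarrow> ennreal" and G :: "(nat \<times> bool \<Rightarrow> real) \<Rightarrow> ennreal"
  assumes G: "G \<in> borel_measurable (PiM (past t) (\<lambda>_. borel))"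
  shows "(\<lambda>(x, u). G x * (\<integral>\<^sup>+w. f (step (traj_of_inputs t x) u w) \<partial>unif01))
           \<in> borel_measurable (PiM (past t) (\<lambda>_. borel) \<Otimes>\<^sub>M borel)"
proof -
  let ?h = "\<lambda>d p. G (fst p) * (\<integral>\<^sup>+w. f (step d (snd p) w) \<partial>unif01)"
  have "(\<lambda>p. ?h (traj_of_inputs t (fst p)) p) \<in> borel_measurable (PiM (past t) (\<lambda>_. borel) \<Otimes>\<^sub>M borel)"
  proof (rule measurable_compose_countable'[where f = ?h, OF _ _ countable_states])
    fix d assume d: "d \<in> states"
    show "(\<lambda>p. ?h d p) \<in> borel_measurable (PiM (past t) (\<lambda>_. borel) \<Otimes>\<^sub>M borel)"
      using measurable_comp[OF measurable_fst G]
        measurable_comp[OF measurable_snd borel_measurable_nn_integral_step[OF d]]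
      by (intro borel_measurable_times_ennreal) (simp_all add: comp_def)
  next
    show "(\<lambda>p. traj_of_inputs t (fst p)) \<in> measurable (PiM (past t) (\<lambda>_. borel) \<Otimes>\<^sub>M borel) (count_space states)"
      using measurable_comp[OF measurable_fst measurable_traj_of_inputs[of t "past t"]] by (simp add: comp_def)
  qed
  then show ?thesis by (simp add: case_prod_beta')
qed

text \<open>One step of the tower property: conditionally on the inputs before time \<open>t\<close>, the state at
  time \<open>t + 1\<close> is distributed as one market step from \<open>traj t\<close>.\<close>

lemma nn_integral_traj_Suc:
  assumes G: "G \<in> borel_measurable (PiM (past t) (\<lambda>_. borel))"
  shows "(\<integral>\<^sup>+\<omega>. G (inputs (past t) \<omega>) * f (traj (Suc t) \<omega>) \<partial>M) =
           (\<integral>\<^sup>+\<omega>. G (inputs (past t) \<omega>) * expected_next f (traj t \<omega>) \<partial>M)"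
proof -
  define K1 where "K1 = insert (t, True) (past t)"
  have sub: "past t \<subseteq> K1" by (auto simp: K1_def)
  have inputs_past: "inputs (past t) \<omega> = restrict (inputs K1 \<omega>) (past t)" for \<omega>
    unfolding inputs_def using sub by (auto simp: fun_eq_iff)
  have input_t: "inputs K1 \<omega> (t, True) = X t True \<omega>" for \<omega>
    by (simp add: inputs_def K1_def)
  define g1 where "g1 x w = G (restrict x (past t)) * f (step (traj_of_inputs t x) (x (t, True)) w)" for x w
  have g1: "(\<lambda>(x, w). g1 x w) \<in> borel_measurable (PiM K1 (\<lambda>_. borel) \<Otimes>\<^sub>M borel)"
    unfolding g1_def by (rule borel_measurable_purchase_integrand[OF sub _ G]) (simp add: K1_def)
  define g2 where "g2 x u = G x * (\<integral>\<^sup>+w. f (step (traj_of_inputs t x) u w) \<partial>unif01)" for x u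
  have g2: "(\<lambda>(x, u). g2 x u) \<in> borel_measurable (PiM (past t) (\<lambda>_. borel) \<Otimes>\<^sub>M borel)"
    unfolding g2_def by (rule borel_measurable_trial_integrand[OF G])
  have "(\<integral>\<^sup>+\<omega>. G (inputs (past t) \<omega>) * f (traj (Suc t) \<omega>) \<partial>M) = (\<integral>\<^sup>+\<omega>. g1 (inputs K1 \<omega>) (X t False \<omega>) \<partial>M)"
    using traj_eq_traj_of_inputs[OF sub] by (simp add: g1_def traj_Suc inputs_past input_t)
  also have "\<dots> = (\<integral>\<^sup>+\<omega>. \<integral>\<^sup>+w. g1 (inputs K1 \<omega>) w \<partial>unif01 \<partial>M)"
    by (rule nn_integral_independent_input[OF _ g1]) (simp add: K1_def)
  also have "\<dots> = (\<integral>\<^sup>+\<omega>. g2 (inputs (past t) \<omega>) (X t True \<omega>) \<partial>M)"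
  proof (rule nn_integral_cong)
    fix \<omega>
    have "(\<lambda>w. f (step (traj t \<omega>) (X t True \<omega>) w)) \<in> borel_measurable unif01"
      using measurable_comp[OF measurable_Pair1' measurable_market_step_fun[OF traj_in_states, of f]]
      by (simp add: comp_def)
    then show "(\<integral>\<^sup>+w. g1 (inputs K1 \<omega>) w \<partial>unif01) = g2 (inputs (past t) \<omega>) (X t True \<omega>)"
      unfolding g1_def g2_def using traj_eq_traj_of_inputs[OF sub, of \<omega>] traj_eq_traj_of_inputs[of t "past t" \<omega>]
      by (simp add: inputs_past input_t nn_integral_cmult)
  qed
  also have "\<dots> = (\<integral>\<^sup>+\<omega>. \<integral>\<^sup>+u. g2 (inputs (past t) \<omega>) u \<partial>unif01 \<partial>M)"
    by (rule nn_integral_independent_input[OF _ g2]) simp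
  also have "\<dots> = (\<integral>\<^sup>+\<omega>. G (inputs (past t) \<omega>) * expected_next f (traj t \<omega>) \<partial>M)"
  proof (rule nn_integral_cong)
    fix \<omega>
    have "(\<lambda>u. \<integral>\<^sup>+w. f (step (traj t \<omega>) u w) \<partial>unif01) \<in> borel_measurable unif01"
      using borel_measurable_nn_integral_step[OF traj_in_states] by simp
    then show "(\<integral>\<^sup>+u. g2 (inputs (past t) \<omega>) u \<partial>unif01) = G (inputs (past t) \<omega>) * expected_next f (traj t \<omega>)"
      unfolding g2_def using traj_eq_traj_of_inputs[of t "past t" \<omega>]
      by (simp add: nn_integral_cmult nn_integral_step)
  qed
  finally show ?thesis .
qed

lemma nn_integral_traj_Suc_le:
  assumes G: "G \<in> borel_measurable (PiM (past t) (\<lambda>_. borel))"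
    and super: "\<And>d. d \<in> states \<Longrightarrow> expected_next f d \<le> a * f d"
  shows "(\<integral>\<^sup>+\<omega>. G (inputs (past t) \<omega>) * f (traj (Suc t) \<omega>) \<partial>M) \<le>
           a * (\<integral>\<^sup>+\<omega>. G (inputs (past t) \<omega>) * f (traj t \<omega>) \<partial>M)"
proof -
  have "(\<integral>\<^sup>+\<omega>. G (inputs (past t) \<omega>) * f (traj (Suc t) \<omega>) \<partial>M) =
          (\<integral>\<^sup>+\<omega>. G (inputs (past t) \<omega>) * expected_next f (traj t \<omega>) \<partial>M)"
    by (rule nn_integral_traj_Suc[OF G])
  also have "\<dots> \<le> (\<integral>\<^sup>+\<omega>. a * (G (inputs (past t) \<omega>) * f (traj t \<omega>)) \<partial>M)"
  proof (rule nn_integral_mono)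
    fix \<omega>
    have "G (inputs (past t) \<omega>) * expected_next f (traj t \<omega>) \<le> G (inputs (past t) \<omega>) * (a * f (traj t \<omega>))"
      by (rule mult_left_mono[OF super[OF traj_in_states]]) simp
    then show "G (inputs (past t) \<omega>) * expected_next f (traj t \<omega>) \<le> a * (G (inputs (past t) \<omega>) * f (traj t \<omega>))"
      by (simp add: ac_simps)
  qed
  also have "\<dots> = a * (\<integral>\<^sup>+\<omega>. G (inputs (past t) \<omega>) * f (traj t \<omega>) \<partial>M)"
    using measurable_comp[OF measurable_inputs G] borel_measurable_traj_fun[of f t]
    by (intro nn_integral_cmult borel_measurable_times_ennreal) (simp_all add: comp_def)
  finally show ?thesis .
qed

lemma nn_integral_traj_le_power:
  assumes super: "\<And>d. d \<in> states \<Longrightarrow> expected_next f d \<le> a * f d"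
  shows "(\<integral>\<^sup>+\<omega>. f (traj t \<omega>) \<partial>M) \<le> a ^ t * f (\<lambda>_. 0)"
proof (induction t)
  case 0
  have "(\<integral>\<^sup>+\<omega>. f (traj 0 \<omega>) \<partial>M) = (\<integral>\<^sup>+\<omega>. f (\<lambda>_. 0) \<partial>M)" by (simp add: traj_def)
  also have "\<dots> = f (\<lambda>_. 0)" by (simp add: emeasure_space_1)
  finally show ?case by simp
next
  case (Suc t)
  have "(\<integral>\<^sup>+\<omega>. 1 * f (traj (Suc t) \<omega>) \<partial>M) \<le> a * (\<integral>\<^sup>+\<omega>. 1 * f (traj t \<omega>) \<partial>M)"
    by (rule nn_integral_traj_Suc_le[OF _ super]) simp
  also have "\<dots> \<le> a * (a ^ t * f (\<lambda>_. 0))"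
    using Suc.IH by (simp add: mult_left_mono)
  finally show ?case by (simp add: mult.assoc)
qed

lemma emeasure_le_of_nn_integral:
  assumes S: "S \<in> sets M" and c: "0 < c" and b: "0 \<le> b"
    and f: "\<And>\<omega>. \<omega> \<in> S \<Longrightarrow> ennreal c \<le> f \<omega>" and int: "(\<integral>\<^sup>+\<omega>. f \<omega> \<partial>M) \<le> ennreal b"
  shows "emeasure M S \<le> ennreal (b / c)"
proof -
  have "ennreal (c * prob S) = (\<integral>\<^sup>+\<omega>. ennreal c * indicator S \<omega> \<partial>M)"
    using c S by (simp add: ennreal_mult emeasure_eq_measure nn_integral_cmult_indicator)
  also have "\<dots> \<le> (\<integral>\<^sup>+\<omega>. f \<omega> \<partial>M)"
    using f by (intro nn_integral_mono) (auto split: split_indicator)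
  finally have "ennreal (c * prob S) \<le> ennreal b" using int by (rule order_trans)
  then have "c * prob S \<le> b" using b by simp
  then show ?thesis using c by (simp add: emeasure_eq_measure pos_le_divide_eq mult.commute ennreal_leI)
qed

theorem AE_purchases_exceed: "AE \<omega> in M. \<exists>t. N < purchases (traj t \<omega>)"
proof (rule AE_I')
  let ?B = "{\<omega> \<in> space M. \<forall>t. purchases (traj t \<omega>) \<le> N}"
  let ?r = "1 - first_buy_bound N / 2"
  have r: "0 \<le> ?r" "?r < 1" using first_buy_bound_pos[of N] first_buy_bound_le_1[of N] by auto
  have B: "?B \<in> sets M" by (intro sets.sets_Collect_countable_All sets_traj_pred)
  have "emeasure M ?B = 0"
  proof (rule emeasure_eq_0_of_le_epsilon)
    fix e :: real assume e: "0 < e"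
    obtain t where t: "?r ^ t < e * (1/2) ^ N"
      using real_arch_pow_inv[of "e * (1/2) ^ N" ?r] e r by auto
    have "(\<integral>\<^sup>+\<omega>. ennreal (purchase_potential N (traj t \<omega>)) \<partial>M) \<le>
            ennreal ?r ^ t * ennreal (purchase_potential N (\<lambda>_. 0))"
      by (rule nn_integral_traj_le_power) (rule expected_next_purchase_potential)
    also have "\<dots> = ennreal (?r ^ t)"
      using r by (simp add: purchase_potential_def purchases_def ennreal_power)
    finally have "emeasure M {\<omega> \<in> space M. purchases (traj t \<omega>) \<le> N} \<le> ennreal (?r ^ t / (1/2) ^ N)"
    proof (rule emeasure_le_of_nn_integral[OF sets_traj_pred, rotated -1])
      fix \<omega> assume "\<omega> \<in> {\<omega> \<in> space M. purchases (traj t \<omega>) \<le> N}"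
      then show "ennreal ((1/2) ^ N) \<le> ennreal (purchase_potential N (traj t \<omega>))"
        by (auto simp: purchase_potential_def intro!: ennreal_leI power_decreasing)
    qed (use r in auto)
    also have "\<dots> \<le> ennreal e" using t by (intro ennreal_leI) (simp add: divide_le_eq)
    finally have "emeasure M {\<omega> \<in> space M. purchases (traj t \<omega>) \<le> N} \<le> ennreal e" .
    moreover have "emeasure M ?B \<le> emeasure M {\<omega> \<in> space M. purchases (traj t \<omega>) \<le> N}"
      by (rule emeasure_mono) (auto intro: sets_traj_pred)
    ultimately show "emeasure M ?B \<le> ennreal e" by (rule order_trans[rotated])
  qed
  then show "?B \<in> null_sets M" using B by auto
  show "{\<omega> \<in> space M. \<not> (\<exists>t. N < purchases (traj t \<omega>))} \<subseteq> ?B"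
    by (auto simp: not_less)
qed

lemma sets_traj_reached: "{\<omega> \<in> space M. \<exists>s\<le>t. P (traj s \<omega>)} \<in> sets M"
proof -
  have "{\<omega> \<in> space M. \<exists>s\<le>t. P (traj s \<omega>)} = (\<Union>s\<in>{..t}. {\<omega> \<in> space M. P (traj s \<omega>)})"
    by auto
  also have "\<dots> \<in> sets M" by (intro sets.finite_UN sets_traj_pred) auto
  finally show ?thesis .
qed

lemma traj_reached_iff_inputs:
  "(\<exists>s\<le>t. P (traj s \<omega>)) \<longleftrightarrow> (\<exists>s\<le>t. P (traj_of_inputs s (inputs (past t) \<omega>)))"
proof -
  have "traj s \<omega> = traj_of_inputs s (inputs (past t) \<omega>)" if "s \<le> t" for s
    using that by (intro traj_eq_traj_of_inputs) auto
  then show ?thesis by auto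
qed

lemma sets_inputs_reached:
  "{Q \<in> space (PiM (past t) (\<lambda>_. borel)). \<exists>s\<le>t. P (traj_of_inputs s Q)} \<in> sets (PiM (past t) (\<lambda>_. borel))"
proof -
  have "{Q \<in> space (PiM (past t) (\<lambda>_. borel)). \<exists>s\<le>t. P (traj_of_inputs s Q)} =
          (\<Union>s\<in>{..t}. {Q \<in> space (PiM (past t) (\<lambda>_. borel)). P (traj_of_inputs s Q)})"
    by auto
  also have "\<dots> \<in> sets (PiM (past t) (\<lambda>_. borel))"
    by (intro sets.finite_UN sets_traj_of_inputs_pred) auto
  finally show ?thesis .
qed

definition stopped :: "((nat \<Rightarrow> nat) \<Rightarrow> real) \<Rightarrow> real \<Rightarrow> nat \<Rightarrow> 'a \<Rightarrow> ennreal" where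
  "stopped F c t \<omega> = (if \<exists>s\<le>t. c \<le> F (traj s \<omega>) then ennreal c else ennreal (F (traj t \<omega>)))"

lemma stopped_Suc_le:
  "stopped F c (Suc t) \<omega> \<le>
     (if \<exists>s\<le>t. c \<le> F (traj s \<omega>) then ennreal c else ennreal (F (traj (Suc t) \<omega>)))"
  unfolding stopped_def by (auto simp: le_Suc_eq intro: ennreal_leI)

lemma nn_integral_stopped_Suc_le:
  assumes super: "\<And>d. d \<in> states \<Longrightarrow> expected_next (\<lambda>d. ennreal (F d)) d \<le> ennreal (F d)"
  shows "(\<integral>\<^sup>+\<omega>. stopped F c (Suc t) \<omega> \<partial>M) \<le> (\<integral>\<^sup>+\<omega>. stopped F c t \<omega> \<partial>M)"
proof -
  define S where "S = {Q. \<exists>s\<le>t. c \<le> F (traj_of_inputs s Q)}"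
  have S_sets: "{Q \<in> space (PiM (past t) (\<lambda>_. borel)). Q \<in> S} \<in> sets (PiM (past t) (\<lambda>_. borel))"
    using sets_inputs_reached[of t "\<lambda>d. c \<le> F d"] unfolding S_def mem_Collect_eq .
  have reached: "(\<exists>s\<le>t. c \<le> F (traj s \<omega>)) \<longleftrightarrow> inputs (past t) \<omega> \<in> S" for \<omega>
    using traj_reached_iff_inputs[of t "\<lambda>d. c \<le> F d" \<omega>] unfolding S_def by simp
  define G where "G Q = (1 - indicator S Q :: ennreal)" for Q
  have G: "G \<in> borel_measurable (PiM (past t) (\<lambda>_. borel))"
    unfolding G_def by (intro borel_measurable_minus_ennreal borel_measurable_const borel_measurable_indicator'[OF S_sets])
  define H where "H \<omega> = ennreal c * indicator S (inputs (past t) \<omega>)" for \<omega>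
  have H: "H \<in> borel_measurable M"
    using measurable_comp[OF measurable_inputs borel_measurable_indicator'[OF S_sets]]
    unfolding H_def by (intro borel_measurable_times_ennreal) (simp_all add: comp_def)
  have GF: "(\<lambda>\<omega>. G (inputs (past t) \<omega>) * ennreal (F (traj s \<omega>))) \<in> borel_measurable M" for s
    using measurable_comp[OF measurable_inputs G] borel_measurable_traj_fun[of "\<lambda>d. ennreal (F d)" s]
    by (intro borel_measurable_times_ennreal) (simp_all add: comp_def)
  have "(\<integral>\<^sup>+\<omega>. stopped F c (Suc t) \<omega> \<partial>M) \<le>
          (\<integral>\<^sup>+\<omega>. H \<omega> + G (inputs (past t) \<omega>) * ennreal (F (traj (Suc t) \<omega>)) \<partial>M)"
  proof (rule nn_integral_mono)
    fix \<omega>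
    show "stopped F c (Suc t) \<omega> \<le> H \<omega> + G (inputs (past t) \<omega>) * ennreal (F (traj (Suc t) \<omega>))"
      using stopped_Suc_le[of F c t \<omega>] reached[of \<omega>]
      by (cases "inputs (past t) \<omega> \<in> S") (simp_all add: H_def G_def)
  qed
  also have "\<dots> = (\<integral>\<^sup>+\<omega>. H \<omega> \<partial>M) + (\<integral>\<^sup>+\<omega>. G (inputs (past t) \<omega>) * ennreal (F (traj (Suc t) \<omega>)) \<partial>M)"
    using H GF by (rule nn_integral_add)
  also have "\<dots> \<le> (\<integral>\<^sup>+\<omega>. H \<omega> \<partial>M) + 1 * (\<integral>\<^sup>+\<omega>. G (inputs (past t) \<omega>) * ennreal (F (traj t \<omega>)) \<partial>M)"
    using super by (intro add_left_mono nn_integral_traj_Suc_le[OF G]) simp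
  also have "\<dots> = (\<integral>\<^sup>+\<omega>. H \<omega> + G (inputs (past t) \<omega>) * ennreal (F (traj t \<omega>)) \<partial>M)"
    using H GF by (simp add: nn_integral_add)
  also have "\<dots> = (\<integral>\<^sup>+\<omega>. stopped F c t \<omega> \<partial>M)"
    by (intro nn_integral_cong) (use reached in \<open>auto simp: stopped_def H_def G_def\<close>)
  finally show ?thesis .
qed

lemma ville_finite_horizon:
  assumes F0: "\<And>d. 0 \<le> F d"
    and super: "\<And>d. d \<in> states \<Longrightarrow> expected_next (\<lambda>d. ennreal (F d)) d \<le> ennreal (F d)"
    and c: "0 < c"
  shows "emeasure M {\<omega> \<in> space M. \<exists>s\<le>t. c \<le> F (traj s \<omega>)} \<le> ennreal (F (\<lambda>_. 0) / c)"
proof (rule emeasure_le_of_nn_integral[OF sets_traj_reached c F0])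
  show "ennreal c \<le> stopped F c t \<omega>" if "\<omega> \<in> {\<omega> \<in> space M. \<exists>s\<le>t. c \<le> F (traj s \<omega>)}" for \<omega>
    using that by (simp add: stopped_def)
  show "(\<integral>\<^sup>+\<omega>. stopped F c t \<omega> \<partial>M) \<le> ennreal (F (\<lambda>_. 0))"
  proof (induction t)
    case 0
    have "(\<integral>\<^sup>+\<omega>. stopped F c 0 \<omega> \<partial>M) \<le> (\<integral>\<^sup>+\<omega>. ennreal (F (\<lambda>_. 0)) \<partial>M)"
      by (intro nn_integral_mono) (simp add: stopped_def traj_def ennreal_leI)
    then show ?case by (simp add: emeasure_space_1)
  next
    case (Suc t)
    with nn_integral_stopped_Suc_le[OF super, of c t] show ?case by (rule order_trans)
  qed
qed

lemma ville_inequality: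
  assumes F0: "\<And>d. 0 \<le> F d"
    and super: "\<And>d. d \<in> states \<Longrightarrow> expected_next (\<lambda>d. ennreal (F d)) d \<le> ennreal (F d)"
    and c: "0 < c"
  shows "emeasure M {\<omega> \<in> space M. \<exists>t. c \<le> F (traj t \<omega>)} \<le> ennreal (F (\<lambda>_. 0) / c)"
proof -
  define E where "E t = {\<omega> \<in> space M. \<exists>s\<le>t. c \<le> F (traj s \<omega>)}" for t
  have E: "range E \<subseteq> sets M"
    unfolding E_def by (auto intro!: sets_traj_reached)
  have inc: "incseq E"
    unfolding incseq_def E_def by (blast intro: le_trans)
  have "{\<omega> \<in> space M. \<exists>t. c \<le> F (traj t \<omega>)} = (\<Union>t. E t)"
    unfolding E_def by blast
  also have "emeasure M (\<Union>t. E t) = (SUP t. emeasure M (E t))"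
    by (rule SUP_emeasure_incseq[OF E inc, symmetric])
  also have "\<dots> \<le> ennreal (F (\<lambda>_. 0) / c)"
    unfolding E_def by (intro SUP_least ville_finite_horizon[OF F0 super c])
  finally show ?thesis .
qed

lemma AE_bounded_of_supermartingale:
  assumes F0: "\<And>d. 0 \<le> F d"
    and super: "\<And>d. d \<in> states \<Longrightarrow> expected_next (\<lambda>d. ennreal (F d)) d \<le> ennreal (F d)"
  shows "AE \<omega> in M. \<exists>C. \<forall>t. F (traj t \<omega>) < C"
proof (rule AE_I')
  let ?B = "{\<omega> \<in> space M. \<forall>k::nat. \<exists>t. real k \<le> F (traj t \<omega>)}"
  have B: "?B \<in> sets M"
    by (intro sets.sets_Collect_countable_All sets.sets_Collect_countable_Ex sets_traj_pred)
  have "emeasure M ?B = 0"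
  proof (rule emeasure_eq_0_of_le_epsilon)
    fix e :: real assume e: "0 < e"
    obtain k :: nat where k: "F (\<lambda>_. 0) / e < real k" using reals_Archimedean2 by blast
    have k0: "0 < real k" using k F0[of "\<lambda>_. 0"] e by (meson divide_nonneg_pos le_less_trans)
    have "emeasure M ?B \<le> emeasure M {\<omega> \<in> space M. \<exists>t. real k \<le> F (traj t \<omega>)}"
      by (rule emeasure_mono) (auto intro: sets_traj_pred sets.sets_Collect_countable_Ex)
    also have "\<dots> \<le> ennreal (F (\<lambda>_. 0) / real k)" by (rule ville_inequality[OF F0 super k0])
    also have "\<dots> \<le> ennreal e"
      using k e k0 by (intro ennreal_leI) (simp add: divide_le_eq mult.commute pos_divide_less_eq)
    finally show "emeasure M ?B \<le> ennreal e" .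
  qed
  then show "?B \<in> null_sets M" using B by auto
  show "{\<omega> \<in> space M. \<not> (\<exists>C. \<forall>t. F (traj t \<omega>) < C)} \<subseteq> ?B"
    by (auto simp: not_less)
qed

theorem AE_market_share_tendsto_1: "AE \<omega> in M. (\<lambda>t. market_share n (traj t \<omega>) 1) \<longlonglongrightarrow> 1"
proof -
  have "AE \<omega> in M. \<forall>N. \<exists>t. N < purchases (traj t \<omega>)"
    using AE_purchases_exceed by (simp add: AE_all_countable)
  moreover have "AE \<omega> in M. \<forall>i\<in>{2..n}. \<exists>C. \<forall>t. lyapunov i (traj t \<omega>) < C"
    using lyapunov_nonneg drift_lyapunov_nonpos
    by (subst AE_ball_countable)
      (auto intro!: AE_bounded_of_supermartingale expected_next_le_of_drift_nonpos)
  ultimately show ?thesis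
  proof eventually_elim
    case (elim \<omega>)
    show ?case
      using elim by (intro market_share_tendsto_1_of_lyapunov_bounded)
        (auto simp: traj_Suc market_step_eq)
  qed
qed

end

theorem mainTheorem7:
  fixes M :: "'a measure" and X :: "nat \<Rightarrow> bool \<Rightarrow> 'a \<Rightarrow> real"
    and n :: nat and v A q :: "nat \<Rightarrow> real"
  assumes "prob_space M"
    and indep: "prob_space.indep_vars M (\<lambda>_. borel) (\<lambda>(t, b). X t b) UNIV"
    and unif: "\<And>t b. distr M borel (X t b) = uniform_measure lborel {0..1::real}"
    and n2: "n \<ge> 2"
    and v_mono: "\<And>i j. 1 \<le> i \<Longrightarrow> i \<le> j \<Longrightarrow> j \<le> n \<Longrightarrow> v j \<le> v i"
    and v_pos: "v n > 0"
    and A_pos: "\<And>i. 1 \<le> i \<Longrightarrow> i \<le> n \<Longrightarrow> A i > 0"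
    and q1: "q 1 \<le> 1"
    and q_strict: "\<And>i j. 1 \<le> i \<Longrightarrow> i < j \<Longrightarrow> j \<le> n \<Longrightarrow> q j < q i"
    and qn: "q n \<ge> 0"
  shows "AE \<omega> in M.
           (\<lambda>t. market_share n (market_traj n v A q (\<lambda>s b. X s b \<omega>) t) 1) \<longlonglongrightarrow> 1"
proof -
  interpret random_market n v A q M X
    by (intro random_market.intro quality_market.intro random_market_axioms.intro) (fact assms)+
  show ?thesis using AE_market_share_tendsto_1 unfolding traj_def .
qed

end
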